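(* Let $K$ be a field, $m\ge2$, $d_1,\ldots,d_m$ positive integers, and $b_i=\prod_{j\ne i}d_j$ for $1\le i\le m$. Let $I_{\mathcal{A}}\subset K[x_1,\ldots,x_m,y_1,\ldots,y_m]$ be the kernel of the $K$-algebra homomorphism $\phi$ to $K[t_1,\ldots,t_{m+1}]$ given by $\phi(x_i)=t_1^{b_i}t_{i+1}$ and $\phi(y_i)=t_{i+1}$ for $1\le i\le m$. Then $\mathrm{bar}(I_{\mathcal{A}})\ge\frac{m(m-1)}{2}$.
   Context: $\mathcal{A}$ is the set of columns of the $(m+1)\times 2m$ matrix $\begin{pmatrix} b_1\ \cdots\ b_m & 0\ \cdots\ 0\\ I_m & I_m\end{pmatrix}$ (Lawrence lifting of $(b_1,\ldots,b_m)$). $\mathrm{bar}(I)$ is the least $s$ such that there are binomials $B_1,\ldots,B_s\in I$ with $\mathrm{rad}(I)=\mathrm{rad}(B_1,\ldots,B_s)$. *)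

theory Defs
  imports "HOL-Library.Poly_Mapping" "HOL-Library.Extended_Nat"
begin

type_synonym 'a mpoly = "(nat \<Rightarrow>\<^sub>0 nat) \<Rightarrow>\<^sub>0 'a"

definition Var :: "nat \<Rightarrow> 'a::comm_ring_1 mpoly" where
  "Var v = Poly_Mapping.single (Poly_Mapping.single v 1) 1"

definition Const :: "'a::comm_ring_1 \<Rightarrow> 'a mpoly" where
  "Const c = Poly_Mapping.single 0 c"

definition vars :: "'a::comm_ring_1 mpoly \<Rightarrow> nat set" where
  "vars p = \<Union> (Poly_Mapping.keys ` Poly_Mapping.keys p)"

definition poly_ring :: "nat set \<Rightarrow> 'a::comm_ring_1 mpoly set" where
  "poly_ring V = {p. vars p \<subseteq> V}"

definition subst :: "(nat \<Rightarrow> 'a::comm_ring_1 mpoly) \<Rightarrow> 'a mpoly \<Rightarrow> 'a mpoly" where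
  "subst \<sigma> p = (\<Sum>a\<in>Poly_Mapping.keys p. Const (Poly_Mapping.lookup p a) * (\<Prod>v\<in>Poly_Mapping.keys a. \<sigma> v ^ Poly_Mapping.lookup a v))"

definition ideal_gen :: "'a::comm_ring_1 mpoly set \<Rightarrow> 'a mpoly list \<Rightarrow> 'a mpoly set" where
  "ideal_gen R Bs = {(\<Sum>j<length Bs. r j * Bs ! j) | r. \<forall>j<length Bs. r j \<in> R}"

definition rad :: "'a::comm_ring_1 mpoly set \<Rightarrow> 'a mpoly set \<Rightarrow> 'a mpoly set" where
  "rad R J = {f \<in> R. \<exists>n. f ^ n \<in> J}"

definition is_binomial :: "'a::comm_ring_1 mpoly \<Rightarrow> bool" where
  "is_binomial p \<longleftrightarrow> card (Poly_Mapping.keys p) \<le> 2"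

text \<open>Binomial arithmetical rank of the ideal I of R (infinity if no such binomials exist).\<close>
definition bar :: "'a::comm_ring_1 mpoly set \<Rightarrow> 'a mpoly set \<Rightarrow> enat" where
  "bar R I = Inf {enat (length Bs) | Bs. set Bs \<subseteq> I \<and> (\<forall>B\<in>set Bs. is_binomial B)
                    \<and> rad R I = rad R (ideal_gen R Bs)}"

definition bexp :: "nat \<Rightarrow> (nat \<Rightarrow> nat) \<Rightarrow> nat \<Rightarrow> nat" where
  "bexp m d i = (\<Prod>j\<in>{1..m} - {i}. d j)"

text \<open>Variables: x_i = variable i, y_i = variable (m+i) for 1 <= i <= m;
  target variables t_j = variable j for 1 <= j <= m+1.
  phi(x_i) = t_1^(b_i) t_(i+1), phi(y_i) = t_(i+1).\<close>
definition lawrence_img :: "nat \<Rightarrow> (nat \<Rightarrow> nat) \<Rightarrow> nat \<Rightarrow> 'a::comm_ring_1 mpoly" where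
  "lawrence_img m d v =
     (if v \<in> {1..m} then Var 1 ^ bexp m d v * Var (v + 1)
      else if v \<in> {m+1..2*m} then Var (v - m + 1)
      else 0)"

definition toric_ideal :: "nat \<Rightarrow> (nat \<Rightarrow> nat) \<Rightarrow> 'a::field mpoly set" where
  "toric_ideal m d = {f \<in> poly_ring {1..2*m}. subst (lawrence_img m d) f = 0}"

end

theory Submission
  imports Defs "HOL-Library.Indicator_Function"
begin

text \<open>For each pair \<open>i < j\<close> the circuit \<open>x\<^sub>i\<^bsup>d\<^sub>i\<^esup> y\<^sub>j\<^bsup>d\<^sub>j\<^esup> - x\<^sub>j\<^bsup>d\<^sub>j\<^esup> y\<^sub>i\<^bsup>d\<^sub>i\<^esup>\<close>
  lies in \<open>I\<^sub>\<A>\<close> and takes the value \<open>1\<close> at the point where \<open>x\<^sub>i = y\<^sub>j = 1\<close> and all other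
  variables vanish. If binomials \<open>B\<^sub>1, \<dots>, B\<^sub>s\<close> generate \<open>I\<^sub>\<A>\<close> up to radical, a power of the
  circuit is a combination of them, so some \<open>B\<^sub>t\<close> does not vanish at that point, i.e. has a
  monomial in \<open>x\<^sub>i, y\<^sub>j\<close> alone. Its other monomial has the same \<open>\<A>\<close>-degree, and comparing
  degrees shows that it involves exactly \<open>x\<^sub>j\<close> and \<open>y\<^sub>i\<close>; hence a single binomial serves at most
  one pair \<open>{i, j}\<close>, and \<open>s \<ge> m(m-1)/2\<close>.\<close>

definition mon_eval :: "(nat \<Rightarrow> 'b::comm_monoid_mult) \<Rightarrow> (nat \<Rightarrow>\<^sub>0 nat) \<Rightarrow> 'b" where
  "mon_eval p a = (\<Prod>v\<in>Poly_Mapping.keys a. p v ^ Poly_Mapping.lookup a v)"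

definition peval :: "(nat \<Rightarrow> 'a::comm_ring_1) \<Rightarrow> 'a mpoly \<Rightarrow> 'a" where
  "peval p f = (\<Sum>a\<in>Poly_Mapping.keys f. Poly_Mapping.lookup f a * mon_eval p a)"

lemma mon_eval_superset:
  assumes "finite S" "Poly_Mapping.keys a \<subseteq> S"
  shows "mon_eval p a = (\<Prod>v\<in>S. p v ^ Poly_Mapping.lookup a v)"
  unfolding mon_eval_def
  by (rule prod.mono_neutral_left) (use assms in \<open>auto simp: in_keys_iff\<close>)

lemma mon_eval_add: "mon_eval p (a + b) = mon_eval p a * mon_eval p b"
proof -
  let ?S = "Poly_Mapping.keys a \<union> Poly_Mapping.keys b"
  have "mon_eval p (a + b) = (\<Prod>v\<in>?S. p v ^ Poly_Mapping.lookup (a + b) v)"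
    by (rule mon_eval_superset) (auto simp: keys_add)
  also have "\<dots> = (\<Prod>v\<in>?S. p v ^ Poly_Mapping.lookup a v) * (\<Prod>v\<in>?S. p v ^ Poly_Mapping.lookup b v)"
    by (simp add: lookup_add power_add prod.distrib)
  also have "\<dots> = mon_eval p a * mon_eval p b"
    by (simp add: mon_eval_superset[of ?S])
  finally show ?thesis .
qed

lemma mon_eval_indicator:
  "mon_eval (indicator S :: nat \<Rightarrow> 'a::comm_ring_1) a = (if Poly_Mapping.keys a \<subseteq> S then 1 else 0)"
proof (cases "Poly_Mapping.keys a \<subseteq> S")
  case True
  then have "\<forall>v\<in>Poly_Mapping.keys a. indicator S v ^ Poly_Mapping.lookup a v = (1::'a)"
    by auto
  with True show ?thesis
    by (simp add: mon_eval_def)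
next
  case False
  then obtain v where "v \<in> Poly_Mapping.keys a" "v \<notin> S" by auto
  then show ?thesis
    unfolding mon_eval_def using False by (auto intro!: prod_zero bexI[of _ v] simp: in_keys_iff zero_power)
qed

lemma peval_superset:
  assumes "finite S" "Poly_Mapping.keys f \<subseteq> S"
  shows "peval p f = (\<Sum>a\<in>S. Poly_Mapping.lookup f a * mon_eval p a)"
  unfolding peval_def
  by (rule sum.mono_neutral_left) (use assms in \<open>auto simp: in_keys_iff\<close>)

lemma peval_add: "peval p (f + g) = peval p f + peval p g"
proof -
  let ?S = "Poly_Mapping.keys f \<union> Poly_Mapping.keys g"
  have "peval p (f + g) = (\<Sum>a\<in>?S. Poly_Mapping.lookup (f + g) a * mon_eval p a)"
    by (rule peval_superset) (auto simp: keys_add)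
  also have "\<dots> = peval p f + peval p g"
    by (simp add: lookup_add distrib_right sum.distrib peval_superset[of ?S])
  finally show ?thesis .
qed

lemma peval_zero [simp]: "peval p 0 = 0"
  by (simp add: peval_def)

lemma peval_single [simp]: "peval p (Poly_Mapping.single a c) = c * mon_eval p a"
  by (simp add: peval_def)

lemma peval_sum: "peval p (sum F S) = (\<Sum>s\<in>S. peval p (F s))"
  by (induction S rule: infinite_finite_induct) (simp_all add: peval_add)

lemma peval_diff: "peval p (f - g) = peval p f - peval p g"
  using peval_add[of p "f - g" g] by simp

lemma sum_single_lookup:
  "(\<Sum>a\<in>Poly_Mapping.keys f. Poly_Mapping.single a (Poly_Mapping.lookup f a)) = f"
  by (rule poly_mapping_eqI) (simp add: lookup_sum lookup_single when_def in_keys_iff)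

lemma peval_mult: "peval p (f * g) = peval p f * peval p g"
proof -
  have "f * g = (\<Sum>a\<in>Poly_Mapping.keys f. \<Sum>b\<in>Poly_Mapping.keys g.
      Poly_Mapping.single (a + b) (Poly_Mapping.lookup f a * Poly_Mapping.lookup g b))"
    by (subst (1) sum_single_lookup[symmetric], subst (2) sum_single_lookup[symmetric])
      (simp add: sum_product mult_single)
  then have "peval p (f * g) = (\<Sum>a\<in>Poly_Mapping.keys f. \<Sum>b\<in>Poly_Mapping.keys g.
      (Poly_Mapping.lookup f a * mon_eval p a) * (Poly_Mapping.lookup g b * mon_eval p b))"
    by (simp add: peval_sum mon_eval_add mult_ac)
  then show ?thesis
    by (simp add: peval_def sum_product)
qed

lemma peval_one [simp]: "peval p 1 = 1"
  using peval_single[of p 0 1] by (simp add: mon_eval_def)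

lemma peval_power: "peval p (f ^ n) = peval p f ^ n"
  by (induction n) (simp_all add: peval_mult)

lemma peval_indicator_nonzero:
  assumes "peval (indicator S) f \<noteq> 0"
  shows "\<exists>a\<in>Poly_Mapping.keys f. Poly_Mapping.keys a \<subseteq> S"
proof (rule ccontr)
  assume "\<not> ?thesis"
  then have "peval (indicator S) f = 0"
    unfolding peval_def mon_eval_indicator by (intro sum.neutral) auto
  with assms show False
    by contradiction
qed

lemma peval_nonzero_generator:
  fixes f :: "'a::idom mpoly"
  assumes "f \<in> rad R (ideal_gen R Bs)" and "peval p f \<noteq> 0"
  shows "\<exists>B\<in>set Bs. peval p B \<noteq> 0"
proof (rule ccontr)
  assume "\<not> ?thesis"
  then have vanish: "peval p (Bs ! t) = 0" if "t < length Bs" for t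
    using that by auto
  obtain n r where repr: "f ^ n = (\<Sum>t<length Bs. r t * Bs ! t)"
    using assms(1) by (auto simp: rad_def ideal_gen_def)
  have "peval p f ^ n = peval p (\<Sum>t<length Bs. r t * Bs ! t)"
    by (simp add: peval_power flip: repr)
  also have "\<dots> = (\<Sum>t<length Bs. peval p (r t) * peval p (Bs ! t))"
    by (simp add: peval_sum peval_mult)
  also have "\<dots> = 0"
    by (simp add: vanish)
  finally show False
    using assms(2) by simp
qed

definition exp_map :: "(nat \<Rightarrow> (nat \<Rightarrow>\<^sub>0 nat)) \<Rightarrow> (nat \<Rightarrow>\<^sub>0 nat) \<Rightarrow> (nat \<Rightarrow>\<^sub>0 nat)" where
  "exp_map e a = (\<Sum>v\<in>Poly_Mapping.keys a. Poly_Mapping.map ((*) (Poly_Mapping.lookup a v)) (e v))"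

lemma lookup_map_mult:
  fixes n :: nat
  shows "Poly_Mapping.lookup (Poly_Mapping.map ((*) n) u) k = n * Poly_Mapping.lookup u k"
  by transfer (auto simp: when_def)

lemma lookup_exp_map_superset:
  assumes "finite S" "Poly_Mapping.keys a \<subseteq> S"
  shows "Poly_Mapping.lookup (exp_map e a) w
    = (\<Sum>v\<in>S. Poly_Mapping.lookup a v * Poly_Mapping.lookup (e v) w)"
  unfolding exp_map_def lookup_sum lookup_map_mult
  by (rule sum.mono_neutral_left) (use assms in \<open>auto simp: in_keys_iff\<close>)

lemma single_one_power:
  fixes u :: "nat \<Rightarrow>\<^sub>0 nat"
  shows "Poly_Mapping.single u (1::'a::comm_semiring_1) ^ n = Poly_Mapping.single (Poly_Mapping.map ((*) n) u) 1"
proof (induction n)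
  case 0
  have "Poly_Mapping.map ((*) 0) u = 0"
    by (rule poly_mapping_eqI) (simp only: lookup_map_mult mult_0 lookup_zero)
  then show ?case
    by (simp only: power_0 single_one)
next
  case (Suc n)
  have "u + Poly_Mapping.map ((*) n) u = Poly_Mapping.map ((*) (Suc n)) u"
    by (rule poly_mapping_eqI) (simp add: lookup_add lookup_map_mult)
  then show ?case
    by (simp only: power_Suc Suc.IH mult_single mult_1)
qed

lemma prod_single_one:
  "(\<Prod>v\<in>S. Poly_Mapping.single (g v) (1::'a::comm_semiring_1)) = Poly_Mapping.single (\<Sum>v\<in>S. g v) 1"
  by (induction S rule: infinite_finite_induct) (simp_all add: mult_single)

lemma subst_monomial_map:
  assumes "\<forall>v\<in>vars f. \<sigma> v = Poly_Mapping.single (e v) 1"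
  shows "subst \<sigma> f = (\<Sum>a\<in>Poly_Mapping.keys f. Poly_Mapping.single (exp_map e a) (Poly_Mapping.lookup f a))"
  unfolding subst_def
proof (rule sum.cong)
  fix a assume a: "a \<in> Poly_Mapping.keys f"
  have "(\<Prod>v\<in>Poly_Mapping.keys a. \<sigma> v ^ Poly_Mapping.lookup a v)
      = (\<Prod>v\<in>Poly_Mapping.keys a. Poly_Mapping.single (Poly_Mapping.map ((*) (Poly_Mapping.lookup a v)) (e v)) 1)"
    using a assms by (intro prod.cong) (auto simp: vars_def single_one_power)
  then show "Const (Poly_Mapping.lookup f a) * (\<Prod>v\<in>Poly_Mapping.keys a. \<sigma> v ^ Poly_Mapping.lookup a v)
      = Poly_Mapping.single (exp_map e a) (Poly_Mapping.lookup f a)"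
    by (simp add: prod_single_one exp_map_def Const_def mult_single)
qed simp

lemma lookup_subst_monomial_map:
  assumes "\<forall>v\<in>vars f. \<sigma> v = Poly_Mapping.single (e v) 1"
  shows "Poly_Mapping.lookup (subst \<sigma> f) w
    = (\<Sum>a\<in>Poly_Mapping.keys f. if exp_map e a = w then Poly_Mapping.lookup f a else 0)"
  by (simp add: subst_monomial_map[OF assms] lookup_sum lookup_single when_def)

lemma subst_monomial_map_eq_0_fibre:
  assumes "\<forall>v\<in>vars f. \<sigma> v = Poly_Mapping.single (e v) 1"
    and "subst \<sigma> f = 0" and "a \<in> Poly_Mapping.keys f"
  shows "\<exists>a'\<in>Poly_Mapping.keys f. a' \<noteq> a \<and> exp_map e a' = exp_map e a"
proof (rule ccontr)
  assume "\<not> ?thesis"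
  then have "Poly_Mapping.lookup (subst \<sigma> f) (exp_map e a)
      = (\<Sum>a'\<in>Poly_Mapping.keys f. if a' = a then Poly_Mapping.lookup f a else 0)"
    unfolding lookup_subst_monomial_map[OF assms(1)] by (intro sum.cong) auto
  also have "\<dots> = Poly_Mapping.lookup f a"
    using assms(3) by simp
  finally show False
    using assms(2,3) by (simp add: in_keys_iff)
qed

lemma subst_monomial_map_binomial:
  assumes "\<forall>v\<in>Poly_Mapping.keys a \<union> Poly_Mapping.keys b. \<sigma> v = Poly_Mapping.single (e v) 1"
    and "exp_map e a = exp_map e b"
  shows "subst \<sigma> (Poly_Mapping.single a 1 - Poly_Mapping.single b (1::'a::comm_ring_1)) = 0"
proof (cases "a = b")
  case True
  then show ?thesis by (simp add: subst_def)
next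
  case False
  let ?f = "Poly_Mapping.single a 1 - Poly_Mapping.single b (1::'a)"
  have keys: "Poly_Mapping.keys ?f = {a, b}"
    using False by (auto simp: in_keys_iff lookup_minus lookup_single when_def split: if_splits)
  have \<sigma>: "\<forall>v\<in>vars ?f. \<sigma> v = Poly_Mapping.single (e v) 1"
    using assms(1) keys by (simp add: vars_def)
  have "subst \<sigma> ?f = Poly_Mapping.single (exp_map e a) 1 + Poly_Mapping.single (exp_map e b) (- 1)"
    unfolding subst_monomial_map[OF \<sigma>] keys using False by (simp add: lookup_minus lookup_single)
  then show ?thesis
    using assms(2) by (simp flip: single_add)
qed

definition lawrence_col :: "nat \<Rightarrow> (nat \<Rightarrow> nat) \<Rightarrow> nat \<Rightarrow> (nat \<Rightarrow>\<^sub>0 nat)" where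
  "lawrence_col m d v =
     (if v \<le> m then Poly_Mapping.single 1 (bexp m d v) + Poly_Mapping.single (Suc v) 1
      else Poly_Mapping.single (Suc (v - m)) 1)"

abbreviation lawrence_deg :: "nat \<Rightarrow> (nat \<Rightarrow> nat) \<Rightarrow> (nat \<Rightarrow>\<^sub>0 nat) \<Rightarrow> (nat \<Rightarrow>\<^sub>0 nat)" where
  "lawrence_deg m d \<equiv> exp_map (lawrence_col m d)"

lemma lawrence_img_eq_single:
  assumes "v \<in> {1..2*m}"
  shows "(lawrence_img m d v :: 'a::comm_ring_1 mpoly) = Poly_Mapping.single (lawrence_col m d v) 1"
  using assms by (auto simp: lawrence_img_def lawrence_col_def Var_def single_one_power mult_single)

lemma lookup_lawrence_col:
  "Poly_Mapping.lookup (lawrence_col m d v) w =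
     (if v \<le> m then (if w = 1 then bexp m d v else 0) + (if w = Suc v then 1 else 0)
      else if w = Suc (v - m) then 1 else 0)"
  by (simp add: lawrence_col_def lookup_add lookup_single when_def)

lemma bexp_pos:
  assumes "\<forall>i\<in>{1..m}. d i > 0"
  shows "bexp m d v > 0"
  unfolding bexp_def using assms by (intro prod_pos) auto

lemma mult_bexp:
  assumes "i \<in> {1..m}"
  shows "d i * bexp m d i = prod d {1..m}"
  unfolding bexp_def using assms by (simp add: prod.remove)

lemma lawrence_deg_1:
  assumes "Poly_Mapping.keys a \<subseteq> {1..2*m}"
  shows "Poly_Mapping.lookup (lawrence_deg m d a) 1
    = (\<Sum>v\<in>{1..m}. Poly_Mapping.lookup a v * bexp m d v)"
proof -
  have "Poly_Mapping.lookup (lawrence_deg m d a) 1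
      = (\<Sum>v\<in>{1..2*m}. Poly_Mapping.lookup a v * Poly_Mapping.lookup (lawrence_col m d v) 1)"
    by (rule lookup_exp_map_superset) (use assms in auto)
  also have "\<dots> = (\<Sum>v\<in>{1..m}. Poly_Mapping.lookup a v * Poly_Mapping.lookup (lawrence_col m d v) 1)"
    by (rule sum.mono_neutral_right) (auto simp: lookup_lawrence_col)
  finally show ?thesis
    by (simp add: lookup_lawrence_col)
qed

lemma lawrence_deg_Suc:
  assumes "Poly_Mapping.keys a \<subseteq> {1..2*m}" and "k \<in> {1..m}"
  shows "Poly_Mapping.lookup (lawrence_deg m d a) (Suc k)
    = Poly_Mapping.lookup a k + Poly_Mapping.lookup a (m + k)"
proof -
  have "Poly_Mapping.lookup (lawrence_deg m d a) (Suc k)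
      = (\<Sum>v\<in>{1..2*m}. Poly_Mapping.lookup a v * Poly_Mapping.lookup (lawrence_col m d v) (Suc k))"
    by (rule lookup_exp_map_superset) (use assms in auto)
  also have "\<dots> = (\<Sum>v\<in>{1..2*m}. (if v = k then Poly_Mapping.lookup a v else 0)
                      + (if v = m + k then Poly_Mapping.lookup a v else 0))"
    by (rule sum.cong) (use assms(2) in \<open>auto simp: lookup_lawrence_col\<close>)
  finally show ?thesis
    using assms(2) by (simp add: sum.distrib)
qed

lemma lawrence_deg_two_support:
  assumes "Poly_Mapping.keys a \<subseteq> {i, m + j}" and "i \<in> {1..m}" "j \<in> {1..m}"
  shows "Poly_Mapping.lookup (lawrence_deg m d a) w =
    (if w = 1 then Poly_Mapping.lookup a i * bexp m d i else 0)
    + (if w = Suc i then Poly_Mapping.lookup a i else 0)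
    + (if w = Suc j then Poly_Mapping.lookup a (m + j) else 0)"
proof -
  have "Poly_Mapping.lookup (lawrence_deg m d a) w
      = (\<Sum>v\<in>{i, m + j}. Poly_Mapping.lookup a v * Poly_Mapping.lookup (lawrence_col m d v) w)"
    by (rule lookup_exp_map_superset) (use assms in auto)
  then show ?thesis
    using assms(2,3) by (auto simp: lookup_lawrence_col)
qed

definition circuit_exp :: "nat \<Rightarrow> (nat \<Rightarrow> nat) \<Rightarrow> nat \<Rightarrow> nat \<Rightarrow> (nat \<Rightarrow>\<^sub>0 nat)" where
  "circuit_exp m d i j = Poly_Mapping.single i (d i) + Poly_Mapping.single (m + j) (d j)"

definition circuit :: "nat \<Rightarrow> (nat \<Rightarrow> nat) \<Rightarrow> nat \<Rightarrow> nat \<Rightarrow> 'a::comm_ring_1 mpoly" where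
  "circuit m d i j = Poly_Mapping.single (circuit_exp m d i j) 1 - Poly_Mapping.single (circuit_exp m d j i) 1"

lemma lookup_circuit_exp:
  "Poly_Mapping.lookup (circuit_exp m d i j) v = (if v = i then d i else 0) + (if v = m + j then d j else 0)"
  by (simp add: circuit_exp_def lookup_add lookup_single when_def)

lemma keys_circuit_exp: "Poly_Mapping.keys (circuit_exp m d i j) \<subseteq> {i, m + j}"
  by (auto simp: in_keys_iff lookup_circuit_exp split: if_splits)

lemma lawrence_deg_circuit_exp:
  assumes "i \<in> {1..m}" "j \<in> {1..m}"
  shows "lawrence_deg m d (circuit_exp m d i j) = lawrence_deg m d (circuit_exp m d j i)"
proof (rule poly_mapping_eqI)
  fix w
  show "Poly_Mapping.lookup (lawrence_deg m d (circuit_exp m d i j)) w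
      = Poly_Mapping.lookup (lawrence_deg m d (circuit_exp m d j i)) w"
    using assms mult_bexp[OF assms(1)] mult_bexp[OF assms(2)]
    by (simp add: lawrence_deg_two_support[OF keys_circuit_exp] lookup_circuit_exp)
qed

lemma circuit_in_toric_ideal:
  assumes "i \<in> {1..m}" "j \<in> {1..m}"
  shows "(circuit m d i j :: 'a::field mpoly) \<in> toric_ideal m d"
proof -
  let ?S = "Poly_Mapping.keys (circuit_exp m d i j) \<union> Poly_Mapping.keys (circuit_exp m d j i)"
  have S: "?S \<subseteq> {1..2*m}"
    using keys_circuit_exp[of m d i j] keys_circuit_exp[of m d j i] assms by auto
  have "Poly_Mapping.keys (circuit m d i j :: 'a mpoly) \<subseteq> {circuit_exp m d i j, circuit_exp m d j i}"
    unfolding circuit_def using keys_diff by fastforce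
  then have "vars (circuit m d i j :: 'a mpoly) \<subseteq> {1..2*m}"
    using S unfolding vars_def by blast
  moreover have "subst (lawrence_img m d) (circuit m d i j :: 'a mpoly) = 0"
    unfolding circuit_def
    by (rule subst_monomial_map_binomial[where e = "lawrence_col m d"])
      (use S lawrence_img_eq_single lawrence_deg_circuit_exp[OF assms] in blast)+
  ultimately show ?thesis
    by (simp add: toric_ideal_def poly_ring_def)
qed

lemma peval_circuit:
  assumes "j \<in> {1..m}" "i \<noteq> j" and "d j > 0"
  shows "peval (indicator {i, m + j}) (circuit m d i j :: 'a::comm_ring_1 mpoly) = 1"
proof -
  have "j \<in> Poly_Mapping.keys (circuit_exp m d j i)" and "j \<notin> {i, m + j}"
    using assms by (auto simp: in_keys_iff lookup_circuit_exp)
  then have "\<not> Poly_Mapping.keys (circuit_exp m d j i) \<subseteq> {i, m + j}"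
    by blast
  then show ?thesis
    by (simp add: circuit_def peval_diff mon_eval_indicator keys_circuit_exp)
qed

lemma lookup_eq_0_if_keys_subset:
  "Poly_Mapping.keys a \<subseteq> S \<Longrightarrow> v \<notin> S \<Longrightarrow> Poly_Mapping.lookup a v = 0"
  by (auto simp: in_keys_iff)

text \<open>Matching the coordinates \<open>t\<^sub>k\<^sub>+\<^sub>1\<close> of the degrees kills all variables but
  \<open>x\<^sub>i, y\<^sub>i, x\<^sub>j, y\<^sub>j\<close> in \<open>a\<close> and forces \<open>a(x\<^sub>i) + a(y\<^sub>i) = w(x\<^sub>i)\<close>; the coordinate \<open>t\<^sub>1\<close> then
  gives \<open>a(x\<^sub>j) b\<^sub>j = a(y\<^sub>i) b\<^sub>i\<close>, and if both sides vanish then \<open>a = w\<close>.\<close>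

lemma lawrence_fibre_two_support:
  assumes w: "Poly_Mapping.keys w \<subseteq> {i, m + j}"
    and ij: "i \<in> {1..m}" "j \<in> {1..m}" "i \<noteq> j"
    and dpos: "\<forall>k\<in>{1..m}. d k > 0"
    and a: "Poly_Mapping.keys a \<subseteq> {1..2*m}"
    and deg: "lawrence_deg m d a = lawrence_deg m d w"
    and "a \<noteq> w"
  shows "Poly_Mapping.lookup a j > 0 \<and> Poly_Mapping.lookup a (m + i) > 0"
proof -
  let ?a = "Poly_Mapping.lookup a" and ?w = "Poly_Mapping.lookup w" and ?b = "bexp m d"
  have w0: "?w v = 0" if "v \<noteq> i" "v \<noteq> m + j" for v
    using lookup_eq_0_if_keys_subset[OF w] that by simp
  have a0: "?a v = 0" if "v \<notin> {1..2*m}" for v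
    using lookup_eq_0_if_keys_subset[OF a] that by simp
  have col: "?a k + ?a (m + k) = (if k = i then ?w i else 0) + (if k = j then ?w (m + j) else 0)"
    if "k \<in> {1..m}" for k
    using lawrence_deg_Suc[OF a that, of d] lawrence_deg_two_support[OF w ij(1,2), of d "Suc k"] deg that
    by auto
  then have col0: "?a k = 0 \<and> ?a (m + k) = 0" if "k \<in> {1..m}" "k \<noteq> i" "k \<noteq> j" for k
    using that by fastforce
  have "(\<Sum>v\<in>{1..m}. ?a v * ?b v) = (\<Sum>v\<in>{i, j}. ?a v * ?b v)"
    by (rule sum.mono_neutral_right) (use ij col0 in auto)
  moreover have "(\<Sum>v\<in>{1..m}. ?a v * ?b v) = ?w i * ?b i"
    using lawrence_deg_1[OF a, of d] lawrence_deg_two_support[OF w ij(1,2), of d 1] deg ij by simp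
  moreover have "?a i + ?a (m + i) = ?w i"
    using col[OF ij(1)] ij(3) by simp
  ultimately have "?a i * ?b i + ?a j * ?b j = (?a i + ?a (m + i)) * ?b i"
    using ij(3) by simp
  then have balance: "?a j * ?b j = ?a (m + i) * ?b i"
    by (simp add: distrib_right)
  show ?thesis
  proof (rule ccontr)
    assume "\<not> ?thesis"
    then have aj: "?a j = 0" and ami: "?a (m + i) = 0"
      using balance bexp_pos[OF dpos, of i] bexp_pos[OF dpos, of j] by auto
    have "a = w"
    proof (rule poly_mapping_eqI)
      fix v
      have "v \<in> {1..m} \<or> (v - m \<in> {1..m} \<and> v = m + (v - m)) \<or> v \<notin> {1..2*m}"
        by auto
      then consider (x) "v \<in> {1..m}" | (y) k where "k \<in> {1..m}" "v = m + k" | (out) "v \<notin> {1..2*m}"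
        by blast
      then show "?a v = ?w v"
      proof cases
        case x
        then show ?thesis
          using col[OF x] col0[OF x] aj ami w0[of v] ij by (cases "v = i") auto
      next
        case y
        then show ?thesis
          using col[OF y(1)] col0[OF y(1)] aj ami w0[of v] ij by (cases "k = j") auto
      next
        case out
        then show ?thesis
          using a0[OF out] w0[of v] ij by auto
      qed
    qed
    with \<open>a \<noteq> w\<close> show False ..
  qed
qed

lemma toric_binomial_detects_one_pair:
  fixes B :: "'a::field mpoly"
  assumes B: "B \<in> toric_ideal m d" "is_binomial B"
    and dpos: "\<forall>k\<in>{1..m}. d k > 0"
    and ij: "i \<in> {1..m}" "j \<in> {1..m}" "i \<noteq> j" and kl: "k \<in> {1..m}" "l \<in> {1..m}"
    and ev_ij: "peval (indicator {i, m + j}) B \<noteq> 0"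
    and ev_kl: "peval (indicator {k, m + l}) B \<noteq> 0"
  shows "{k, l} = {i, j}"
proof -
  have vars: "vars B \<subseteq> {1..2*m}" and kernel: "subst (lawrence_img m d) B = 0"
    using B(1) by (auto simp: toric_ideal_def poly_ring_def)
  have \<sigma>: "\<forall>v\<in>vars B. lawrence_img m d v = Poly_Mapping.single (lawrence_col m d v) (1::'a)"
    using vars lawrence_img_eq_single by blast
  have keys_B: "Poly_Mapping.keys c \<subseteq> {1..2*m}" if "c \<in> Poly_Mapping.keys B" for c
    using vars that by (auto simp: vars_def)
  obtain w1 where w1: "w1 \<in> Poly_Mapping.keys B" "Poly_Mapping.keys w1 \<subseteq> {i, m + j}"
    using peval_indicator_nonzero[OF ev_ij] by blast
  obtain w2 where w2: "w2 \<in> Poly_Mapping.keys B" "Poly_Mapping.keys w2 \<subseteq> {k, m + l}"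
    using peval_indicator_nonzero[OF ev_kl] by blast
  obtain a where a: "a \<in> Poly_Mapping.keys B" "a \<noteq> w1" "lawrence_deg m d a = lawrence_deg m d w1"
    using subst_monomial_map_eq_0_fibre[OF \<sigma> kernel w1(1)] by blast
  have pos: "Poly_Mapping.lookup a j > 0" "Poly_Mapping.lookup a (m + i) > 0"
    using lawrence_fibre_two_support[OF w1(2) ij dpos keys_B[OF a(1)] a(3,2)] by auto
  show ?thesis
  proof (cases "a = w2")
    case True
    have "j \<in> Poly_Mapping.keys w2" "m + i \<in> Poly_Mapping.keys w2"
      using pos True by (simp_all add: in_keys_iff)
    then have "j \<in> {k, m + l}" "m + i \<in> {k, m + l}"
      using subsetD[OF w2(2), of j] subsetD[OF w2(2), of "m + i"] by simp_all
    then have "k = j" "l = i"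
      using ij kl by auto
    then show ?thesis
      by (simp add: insert_commute)
  next
    case False
    have "w2 = w1"
    proof (rule ccontr)
      assume "w2 \<noteq> w1"
      then have "card {w1, a, w2} = 3"
        using False a(2) by auto
      moreover have "card {w1, a, w2} \<le> card (Poly_Mapping.keys B)"
        using w1(1) w2(1) a(1) by (intro card_mono) auto
      ultimately show False
        using B(2) by (simp add: is_binomial_def)
    qed
    have deg: "Poly_Mapping.lookup a t + Poly_Mapping.lookup a (m + t)
        = Poly_Mapping.lookup w1 t + Poly_Mapping.lookup w1 (m + t)" if "t \<in> {1..m}" for t
      using lawrence_deg_Suc[OF keys_B[OF a(1)] that, of d] lawrence_deg_Suc[OF keys_B[OF w1(1)] that, of d] a(3)
      by simp
    have "Poly_Mapping.lookup w1 (m + i) = 0" "Poly_Mapping.lookup w1 j = 0"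
      using lookup_eq_0_if_keys_subset[OF w1(2), of "m + i"] lookup_eq_0_if_keys_subset[OF w1(2), of j] ij
      by auto
    then have "Poly_Mapping.lookup w1 i > 0" "Poly_Mapping.lookup w1 (m + j) > 0"
      using deg[OF ij(1)] deg[OF ij(2)] pos by linarith+
    then have "i \<in> Poly_Mapping.keys w2" "m + j \<in> Poly_Mapping.keys w2"
      using \<open>w2 = w1\<close> by (simp_all add: in_keys_iff)
    then have "i \<in> {k, m + l}" "m + j \<in> {k, m + l}"
      using subsetD[OF w2(2), of i] subsetD[OF w2(2), of "m + j"] by simp_all
    then have "k = i" "l = j"
      using ij kl by auto
    then show ?thesis
      by simp
  qed
qed

lemma choose_two_le_length_binomial_generators:
  fixes Bs :: "'a::field mpoly list" and m :: nat and d :: "nat \<Rightarrow> nat"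
  defines "R \<equiv> poly_ring {1..2*m} :: 'a mpoly set"
  assumes gens: "set Bs \<subseteq> toric_ideal m d" "\<forall>B\<in>set Bs. is_binomial B"
    and rad: "rad R (toric_ideal m d) = rad R (ideal_gen R Bs)"
    and dpos: "\<forall>k\<in>{1..m}. d k > 0"
  shows "m choose 2 \<le> length Bs"
proof -
  define Pairs where "Pairs = {P. P \<subseteq> {1..m} \<and> card P = 2}"
  define detects where
    "detects B P \<longleftrightarrow> (\<exists>i j. P = {i, j} \<and> i \<noteq> j \<and> peval (indicator {i, m + j}) B \<noteq> 0)"
    for B :: "'a mpoly" and P
  have "\<exists>B\<in>set Bs. detects B P" if "P \<in> Pairs" for P
  proof -
    have "card P = 2"
      using that by (simp add: Pairs_def)
    then obtain i j where P: "P = {i, j}" "i \<noteq> j"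
      unfolding card_2_iff by blast
    then have ij: "i \<in> {1..m}" "j \<in> {1..m}"
      using that by (auto simp: Pairs_def)
    have "circuit m d i j \<in> toric_ideal m d"
      using circuit_in_toric_ideal[OF ij] .
    then have mem: "circuit m d i j \<in> rad R (ideal_gen R Bs)"
      unfolding rad[symmetric] by (auto simp: rad_def R_def toric_ideal_def intro: exI[of _ 1])
    have "peval (indicator {i, m + j}) (circuit m d i j :: 'a mpoly) = 1"
      by (rule peval_circuit) (use ij P dpos in auto)
    then have "peval (indicator {i, m + j}) (circuit m d i j :: 'a mpoly) \<noteq> 0"
      by simp
    with mem have "\<exists>B\<in>set Bs. peval (indicator {i, m + j}) B \<noteq> 0"
      by (rule peval_nonzero_generator)
    then show ?thesis
      using P unfolding detects_def by blast
  qed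
  then obtain g where g: "\<And>P. P \<in> Pairs \<Longrightarrow> g P \<in> set Bs \<and> detects (g P) P"
    by metis
  have "inj_on g Pairs"
  proof (rule inj_onI)
    fix P Q assume P: "P \<in> Pairs" and Q: "Q \<in> Pairs" and eq: "g P = g Q"
    obtain i j where ij: "P = {i, j}" "i \<noteq> j" "peval (indicator {i, m + j}) (g P) \<noteq> 0"
      using g[OF P] by (auto simp: detects_def)
    obtain k l where kl: "Q = {k, l}" "peval (indicator {k, m + l}) (g P) \<noteq> 0"
      using g[OF Q] eq by (auto simp: detects_def)
    have "g P \<in> toric_ideal m d" "is_binomial (g P)"
      using g[OF P] gens by auto
    then show "P = Q"
      using toric_binomial_detects_one_pair[OF _ _ dpos _ _ ij(2) _ _ ij(3) kl(2)] P Q ij(1) kl(1)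
      by (auto simp: Pairs_def)
  qed
  then have "card Pairs \<le> card (set Bs)"
    using g by (intro card_inj_on_le) auto
  also have "\<dots> \<le> length Bs"
    by (rule card_length)
  finally show ?thesis
    by (simp add: Pairs_def n_subsets)
qed

theorem theorem4p10:
  fixes m :: nat and d :: "nat \<Rightarrow> nat"
  assumes "m \<ge> 2" and "\<forall>i\<in>{1..m}. d i > 0"
  shows "enat (m * (m - 1) div 2)
           \<le> bar (poly_ring {1..2*m} :: 'a::field mpoly set) (toric_ideal m d :: 'a mpoly set)"
  \<comment> \<open>The bound holds for every \<open>m\<close>.\<close>
  unfolding bar_def
  using choose_two_le_length_binomial_generators[where 'a = 'a and m = m and d = d] assms(2)
  by (intro Inf_greatest) (auto simp: choose_two)

end
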